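(* Let $p$ be a prime and let $P$ be any box with inputs and outputs in $\mathbb{Z}_p$. For $j\in\mathbb{Z}_p$ define $$\mu_j=\frac1{p^2}\sum_{x,y=0}^{p-1}\ \sum_{k=0}^{p-1}P(a=k,\,b=k-xy+j\mid x,y).$$ Then $P\to\sum_{j=0}^{p-1}\mu_j\,PR_{p,j}$. Explicitly, the following protocol uses one copy of $P$. Alice and Bob draw independent uniform shared $\alpha,\beta,\gamma\in\mathbb{Z}_p$. They input $x+\alpha$ and $y+\beta$ into $P$ and obtain $a',b'$. Alice outputs $a=a'-\beta x-\alpha\beta+\gamma$ and Bob outputs $b=b'+\alpha y+\gamma$. The resulting box is exactly $\sum_{j}\mu_jPR_{p,j}$.
   Context: Let $p$ be a prime. All arithmetic on elements of $\mathbb{Z}_p$ is modulo $p$. A box is a conditional probability distribution $P(a,b\mid x,y)$ with $a,b,x,y\in\mathbb{Z}_p$. It is shared by Alice, who supplies $x$ and receives $a$, and Bob, who supplies $y$ and receives $b$. Different copies act independently. For $j\in\mathbb{Z}_p$, the box $PR_{p,j}$ is defined by $PR_{p,j}(a,b\mid x,y)=1/p$ if $a-b=xy-j$, and $0$ otherwise. A convex combination of boxes is the corresponding convex combination of conditional distributions. $P_1\to P_2$ means the following. For some $N\ge1$, Alice and Bob, using shared randomness, $N$ copies of $P_1$, and local processing but no communication, can exactly produce outputs distributed as $P_2(a,b\mid x,y)$ for every input pair $(x,y)$. *)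

theory Defs
  imports Complex_Main "HOL-Computational_Algebra.Primes" "HOL-Number_Theory.Cong"
begin

text \<open>A box on Z_p is a function  P a b x y  = P(a,b | x,y), where the elements
  of Z_p are represented by the naturals 0..p-1.\<close>

type_synonym box = "nat \<Rightarrow> nat \<Rightarrow> nat \<Rightarrow> nat \<Rightarrow> real"

definition is_box :: "nat \<Rightarrow> box \<Rightarrow> bool" where
  "is_box p P \<longleftrightarrow>
     (\<forall>a<p. \<forall>b<p. \<forall>x<p. \<forall>y<p. P a b x y \<ge> 0) \<and>
     (\<forall>x<p. \<forall>y<p. (\<Sum>a<p. \<Sum>b<p. P a b x y) = 1)"

definition PR :: "nat \<Rightarrow> nat \<Rightarrow> box" where
  "PR p j a b x y =
     (if [int a - int b = int x * int y - int j] (mod int p) then 1 / real p else 0)"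

definition mu :: "nat \<Rightarrow> box \<Rightarrow> nat \<Rightarrow> real" where
  "mu p P j = (1 / (real p)^2) *
     (\<Sum>x<p. \<Sum>y<p. \<Sum>k<p.
        P k (nat ((int k - int x * int y + int j) mod int p)) x y)"

definition tuples :: "nat \<Rightarrow> nat \<Rightarrow> nat list set" where
  "tuples p N = {l. length l = N \<and> set l \<subseteq> {..<p}}"

text \<open>Alice picks the inputs of the N copies as a function of the
  shared randomness r and her input x, and her output as a function of r, x and
  the N outputs she receives; likewise for Bob. (Local randomness can be
  absorbed into the shared randomness.)\<close>
definition simulates :: "nat \<Rightarrow> nat \<Rightarrow> box \<Rightarrow> box \<Rightarrow> bool" where
  "simulates p N P Q \<longleftrightarrow>
    (\<exists>(R :: nat set) (w :: nat \<Rightarrow> real)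
       (fA :: nat \<Rightarrow> nat \<Rightarrow> nat list) (gA :: nat \<Rightarrow> nat \<Rightarrow> nat list \<Rightarrow> nat)
       (fB :: nat \<Rightarrow> nat \<Rightarrow> nat list) (gB :: nat \<Rightarrow> nat \<Rightarrow> nat list \<Rightarrow> nat).
       finite R \<and> (\<forall>r\<in>R. w r \<ge> 0) \<and> sum w R = 1 \<and>
       (\<forall>r\<in>R. \<forall>x<p. fA r x \<in> tuples p N) \<and>
       (\<forall>r\<in>R. \<forall>y<p. fB r y \<in> tuples p N) \<and>
       (\<forall>x<p. \<forall>y<p. \<forall>a<p. \<forall>b<p.
          Q a b x y =
            (\<Sum>r\<in>R. w r *
               (\<Sum>as\<in>tuples p N. \<Sum>bs\<in>tuples p N.
                  (\<Prod>i<N. P (as ! i) (bs ! i) (fA r x ! i) (fB r y ! i)) *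
                  (if gA r x as = a \<and> gB r y bs = b then 1 else 0)))))"

definition transforms :: "nat \<Rightarrow> box \<Rightarrow> box \<Rightarrow> bool" where
  "transforms p P Q \<longleftrightarrow> (\<exists>N\<ge>1. simulates p N P Q)"

end

theory Submission
  imports Defs "HOL-Library.Countable"
begin

(* Averaging over
   gamma forces only the difference a - b to matter; the corrections make the event
   a - b = x y - j equivalent to b' = a' - X Y + j; and averaging over alpha, beta makes
   X, Y uniform.  Hence the output probability is mu_j / p for j = x y - a + b, which is
   exactly the value of the mixture sum_j mu_j PR_j. *)

lemma residue_eq_iff_cong:
  assumes "0 < m" and "a < m"
  shows "nat (u mod int m) = a \<longleftrightarrow> [u = int a] (mod int m)"
  using assms by (auto simp: cong_def)

lemma sum_cong_delta:
  assumes "0 < m"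
  shows "(\<Sum>g<m. if [int g = c] (mod int m) then f g else 0) = f (nat (c mod int m))"
proof -
  have "[int g = c] (mod int m) \<longleftrightarrow> g = nat (c mod int m)" if "g < m" for g
    using residue_eq_iff_cong[OF assms that, of c] by (auto simp: cong_sym_eq)
  then have "(\<Sum>g<m. if [int g = c] (mod int m) then f g else 0)
           = (\<Sum>g<m. if g = nat (c mod int m) then f g else 0)"
    by (intro sum.cong) auto
  also have "\<dots> = f (nat (c mod int m))"
    using assms by (simp add: nat_less_iff)
  finally show ?thesis .
qed

text \<open>Translation by x is a permutation of Z_m, so it does not change a sum over Z_m.\<close>
lemma sum_shift_mod:
  fixes x m :: nat
  assumes "0 < m"
  shows "(\<Sum>a<m. f ((x + a) mod m)) = (\<Sum>z<m. f z :: 'a :: comm_monoid_add)"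
proof -
  have inj: "inj_on (\<lambda>a. (x + a) mod m) {..<m}"
  proof
    fix a a' assume "a \<in> {..<m}" "a' \<in> {..<m}" "(x + a) mod m = (x + a') mod m"
    then show "a = a'"
      using cong_add_lcancel_nat[of x a a' m] by (simp add: cong_def)
  qed
  have "(\<lambda>a. (x + a) mod m) ` {..<m} = {..<m}"
    by (rule endo_inj_surj) (use inj assms in auto)
  then show ?thesis
    using sum.reindex[OF inj, of f] by simp
qed

text \<open>This is how the shared random gamma turns two local outputs into a
  condition on their difference only.\<close>
lemma sum_common_offset:
  assumes "0 < m"
  shows "(\<Sum>g<m. if [u + int g = A] (mod int m) \<and> [v + int g = B] (mod int m) then 1 else 0 :: real)
       = (if [u - v = A - B] (mod int m) then 1 else 0)"
proof -
  have split: "[u + int g = A] (mod int m) \<and> [v + int g = B] (mod int m) \<longleftrightarrow>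
               [int g = B - v] (mod int m) \<and> [u - v = A - B] (mod int m)" for g
  proof -
    have "u + int g - A = (int g - (B - v)) + ((u - v) - (A - B))"
      and "v + int g - B = int g - (B - v)" by simp_all
    then show ?thesis
      by (metis cong_iff_dvd_diff dvd_add_right_iff)
  qed
  show ?thesis
  proof (cases "[u - v = A - B] (mod int m)")
    case True
    then show ?thesis
      unfolding split using sum_cong_delta[OF assms, of "B - v" "\<lambda>_. 1::real"] by simp
  qed (simp add: split)
qed

text \<open>The algebraic heart of the protocol: with X = x + alpha and Y = y + beta, the
  correction terms -beta x - alpha beta and +alpha y exactly convert a correlation
  b' = a' - X Y + j into the correlation a - b = x y - j, whatever alpha and beta are.\<close>
lemma cong_product_shift:
  fixes x y \<alpha> \<beta> X Y a' b' c :: int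
  assumes "[X = x + \<alpha>] (mod m)" and "[Y = y + \<beta>] (mod m)"
  shows "[(a' - \<beta> * x - \<alpha> * \<beta>) - (b' + \<alpha> * y) = c] (mod m)
     \<longleftrightarrow> [b' = a' - X * Y + (x * y - c)] (mod m)"
proof -
  have "[X * Y = (x + \<alpha>) * (y + \<beta>)] (mod m)"
    using assms by (rule cong_mult)
  then have XY: "m dvd X * Y - (x + \<alpha>) * (y + \<beta>)"
    by (simp add: cong_iff_dvd_diff)
  have diff: "b' - (a' - X * Y + (x * y - c))
      = - ((a' - \<beta> * x - \<alpha> * \<beta>) - (b' + \<alpha> * y) - c) + (X * Y - (x + \<alpha>) * (y + \<beta>))"
    by (simp add: algebra_simps)
  show ?thesis
    unfolding cong_iff_dvd_diff diff dvd_add_left_iff[OF XY] dvd_minus_iff ..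
qed

lemma tuples_one_sum:
  "(\<Sum>as\<in>tuples p 1. f as) = (\<Sum>a<p. f [a])"
proof -
  have "tuples p 1 = (\<lambda>a. [a]) ` {..<p}"
    by (auto simp: tuples_def length_Suc_conv)
  moreover have "inj_on (\<lambda>a. [a]) {..<p}"
    by (auto simp: inj_on_def)
  ultimately show ?thesis
    by (simp add: sum.reindex)
qed

text \<open>The shared randomness in the definition of a simulation is indexed by naturals,
  but any finite set of a countable type (e.g. triples) may be used instead.\<close>
lemma simulates_countable_randomness:
  fixes S :: "'r::countable set" and w :: "'r \<Rightarrow> real"
    and fA fB :: "'r \<Rightarrow> nat \<Rightarrow> nat list" and gA gB :: "'r \<Rightarrow> nat \<Rightarrow> nat list \<Rightarrow> nat"
  assumes "finite S" and "\<forall>r\<in>S. w r \<ge> 0" and "sum w S = 1"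
    and "\<forall>r\<in>S. \<forall>x<p. fA r x \<in> tuples p N" and "\<forall>r\<in>S. \<forall>y<p. fB r y \<in> tuples p N"
    and "\<forall>x<p. \<forall>y<p. \<forall>a<p. \<forall>b<p.
          Q a b x y =
            (\<Sum>r\<in>S. w r *
               (\<Sum>as\<in>tuples p N. \<Sum>bs\<in>tuples p N.
                  (\<Prod>i<N. P (as ! i) (bs ! i) (fA r x ! i) (fB r y ! i)) *
                  (if gA r x as = a \<and> gB r y bs = b then 1 else 0)))"
  shows "simulates p N P Q"
  unfolding simulates_def
proof (intro exI conjI)
  let ?R = "to_nat ` S"
  have reindex: "(\<Sum>n\<in>?R. h (from_nat n)) = (\<Sum>r\<in>S. h r)" for h :: "'r \<Rightarrow> real"
    by (simp add: sum.reindex)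
  show "finite ?R" using assms(1) by simp
  show "\<forall>n\<in>?R. (w \<circ> from_nat) n \<ge> 0" using assms(2) by simp
  show "sum (w \<circ> from_nat) ?R = 1" using reindex[of w] assms(3) by simp
  show "\<forall>n\<in>?R. \<forall>x<p. (fA \<circ> from_nat) n x \<in> tuples p N" using assms(4) by simp
  show "\<forall>n\<in>?R. \<forall>y<p. (fB \<circ> from_nat) n y \<in> tuples p N" using assms(5) by simp
  show "\<forall>x<p. \<forall>y<p. \<forall>a<p. \<forall>b<p.
          Q a b x y =
            (\<Sum>n\<in>?R. (w \<circ> from_nat) n *
               (\<Sum>as\<in>tuples p N. \<Sum>bs\<in>tuples p N.
                  (\<Prod>i<N. P (as ! i) (bs ! i) ((fA \<circ> from_nat) n x ! i) ((fB \<circ> from_nat) n y ! i)) *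
                  (if (gA \<circ> from_nat) n x as = a \<and> (gB \<circ> from_nat) n y bs = b then 1 else 0)))"
    using assms(6) by (simp add: sum.reindex)
qed

definition alice_output :: "nat \<Rightarrow> nat \<times> nat \<times> nat \<Rightarrow> nat \<Rightarrow> nat \<Rightarrow> nat" where
  "alice_output p r x a' = (case r of (\<alpha>, \<beta>, \<gamma>) \<Rightarrow>
     nat ((int a' - int \<beta> * int x - int \<alpha> * int \<beta> + int \<gamma>) mod int p))"

definition bob_output :: "nat \<Rightarrow> nat \<times> nat \<times> nat \<Rightarrow> nat \<Rightarrow> nat \<Rightarrow> nat" where
  "bob_output p r y b' = (case r of (\<alpha>, \<beta>, \<gamma>) \<Rightarrow>
     nat ((int b' + int \<alpha> * int y + int \<gamma>) mod int p))"

definition twirl :: "nat \<Rightarrow> box \<Rightarrow> box" where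
  "twirl p P a b x y =
     (\<Sum>(\<alpha>, \<beta>, \<gamma>)\<in>{..<p} \<times> {..<p} \<times> {..<p}. 1 / real p ^ 3 *
        (\<Sum>a'<p. \<Sum>b'<p. P a' b' ((x + \<alpha>) mod p) ((y + \<beta>) mod p) *
           (if alice_output p (\<alpha>, \<beta>, \<gamma>) x a' = a \<and> bob_output p (\<alpha>, \<beta>, \<gamma>) y b' = b
            then 1 else 0)))"

lemma simulates_twirl:
  assumes "0 < p" and "\<forall>x<p. \<forall>y<p. \<forall>a<p. \<forall>b<p. Q a b x y = twirl p P a b x y"
  shows "simulates p 1 P Q"
proof (rule simulates_countable_randomness)
  let ?S = "{..<p} \<times> {..<p} \<times> {..<p}"
  show "finite ?S" by simp
  show "\<forall>r\<in>?S. (\<lambda>_. 1 / real p ^ 3) r \<ge> 0" by simp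
  show "sum (\<lambda>_. 1 / real p ^ 3) ?S = 1"
    using assms(1) by (simp add: card_cartesian_product power3_eq_cube)
  show "\<forall>r\<in>?S. \<forall>x<p. (\<lambda>(\<alpha>, \<beta>, \<gamma>) x. [(x + \<alpha>) mod p]) r x \<in> tuples p 1"
    using assms(1) by (auto simp: tuples_def)
  show "\<forall>r\<in>?S. \<forall>y<p. (\<lambda>(\<alpha>, \<beta>, \<gamma>) y. [(y + \<beta>) mod p]) r y \<in> tuples p 1"
    using assms(1) by (auto simp: tuples_def)
  show "\<forall>x<p. \<forall>y<p. \<forall>a<p. \<forall>b<p. Q a b x y =
     (\<Sum>r\<in>?S. (\<lambda>_. 1 / real p ^ 3) r *
        (\<Sum>as\<in>tuples p 1. \<Sum>bs\<in>tuples p 1.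
           (\<Prod>i<1. P (as ! i) (bs ! i) ((\<lambda>(\<alpha>, \<beta>, \<gamma>) x. [(x + \<alpha>) mod p]) r x ! i)
                              ((\<lambda>(\<alpha>, \<beta>, \<gamma>) y. [(y + \<beta>) mod p]) r y ! i)) *
           (if (\<lambda>r x as. alice_output p r x (as ! 0)) r x as = a \<and>
               (\<lambda>r y bs. bob_output p r y (bs ! 0)) r y bs = b then 1 else 0)))"
    unfolding tuples_one_sum using assms(2) by (simp add: twirl_def split_def)
qed

lemma offset_average:
  fixes P :: box and x y \<alpha> \<beta> :: nat
  assumes p: "0 < p" and "a < p" and "b < p"
  defines "X \<equiv> (x + \<alpha>) mod p" and "Y \<equiv> (y + \<beta>) mod p"
    and "c \<equiv> int x * int y - int a + int b"
  shows "(\<Sum>\<gamma><p. \<Sum>a'<p. \<Sum>b'<p. P a' b' X Y *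
            (if alice_output p (\<alpha>, \<beta>, \<gamma>) x a' = a \<and> bob_output p (\<alpha>, \<beta>, \<gamma>) y b' = b then 1 else 0))
       = (\<Sum>k<p. P k (nat ((int k - int X * int Y + c) mod int p)) X Y)"
proof -
  have X: "[int X = int x + int \<alpha>] (mod int p)" and Y: "[int Y = int y + int \<beta>] (mod int p)"
    unfolding X_def Y_def by (simp_all add: of_nat_mod)
  have average: "(\<Sum>\<gamma><p. if alice_output p (\<alpha>, \<beta>, \<gamma>) x a' = a \<and> bob_output p (\<alpha>, \<beta>, \<gamma>) y b' = b
                       then 1 else 0 :: real)
      = (if [int b' = int a' - int X * int Y + c] (mod int p) then 1 else 0)" for a' b'
  proof -
    have c_eq: "int x * int y - (int a - int b) = c"
      by (simp add: c_def)
    let ?A = "int a' - int \<beta> * int x - int \<alpha> * int \<beta>" and ?B = "int b' + int \<alpha> * int y"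
    have "alice_output p (\<alpha>, \<beta>, \<gamma>) x a' = a \<and> bob_output p (\<alpha>, \<beta>, \<gamma>) y b' = b \<longleftrightarrow>
          [?A + int \<gamma> = int a] (mod int p) \<and> [?B + int \<gamma> = int b] (mod int p)" for \<gamma>
      using residue_eq_iff_cong[OF p \<open>a < p\<close>] residue_eq_iff_cong[OF p \<open>b < p\<close>]
      by (simp add: alice_output_def bob_output_def add.assoc)
    then have "(\<Sum>\<gamma><p. if alice_output p (\<alpha>, \<beta>, \<gamma>) x a' = a \<and> bob_output p (\<alpha>, \<beta>, \<gamma>) y b' = b
                       then 1 else 0 :: real) = (if [?A - ?B = int a - int b] (mod int p) then 1 else 0)"
      using sum_common_offset[OF p] by simp
    also have "[?A - ?B = int a - int b] (mod int p) \<longleftrightarrow> [int b' = int a' - int X * int Y + c] (mod int p)"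
      using cong_product_shift[OF X Y, of "int a'" "int b'" "int a - int b"] c_eq by simp
    finally show ?thesis .
  qed
  have "(\<Sum>\<gamma><p. \<Sum>a'<p. \<Sum>b'<p. P a' b' X Y *
            (if alice_output p (\<alpha>, \<beta>, \<gamma>) x a' = a \<and> bob_output p (\<alpha>, \<beta>, \<gamma>) y b' = b then 1 else 0))
      = (\<Sum>a'<p. \<Sum>b'<p. \<Sum>\<gamma><p. P a' b' X Y *
            (if alice_output p (\<alpha>, \<beta>, \<gamma>) x a' = a \<and> bob_output p (\<alpha>, \<beta>, \<gamma>) y b' = b then 1 else 0))"
    by (subst sum.swap) (intro sum.cong refl sum.swap)
  also have "\<dots> = (\<Sum>a'<p. \<Sum>b'<p. P a' b' X Y *
           (\<Sum>\<gamma><p. if alice_output p (\<alpha>, \<beta>, \<gamma>) x a' = a \<and> bob_output p (\<alpha>, \<beta>, \<gamma>) y b' = b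
                       then 1 else 0))"
    by (simp only: sum_distrib_left)
  also have "\<dots> = (\<Sum>a'<p. \<Sum>b'<p.
      if [int b' = int a' - int X * int Y + c] (mod int p) then P a' b' X Y else 0)"
    by (intro sum.cong refl) (simp add: average)
  also have "\<dots> = (\<Sum>k<p. P k (nat ((int k - int X * int Y + c) mod int p)) X Y)"
    by (intro sum.cong refl sum_cong_delta[OF p])
  finally show ?thesis .
qed

lemma mu_mod:
  assumes "0 < p"
  shows "mu p P (nat (c mod int p)) = 1 / real p ^ 2 *
    (\<Sum>x<p. \<Sum>y<p. \<Sum>k<p. P k (nat ((int k - int x * int y + c) mod int p)) x y)"
  using assms by (simp add: mu_def mod_add_right_eq)

text \<open>Averaging over alpha and beta as well, the shifted inputs X, Y range over all of
  Z_p, which yields precisely mu_j / p: the protocol realises the PR mixture.\<close>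
lemma twirl_eval:
  assumes p: "0 < p" and "a < p" and "b < p"
  shows "twirl p P a b x y = mu p P (nat ((int x * int y - int a + int b) mod int p)) / real p"
proof -
  define c where "c = int x * int y - int a + int b"
  define G where "G X Y = (\<Sum>k<p. P k (nat ((int k - int X * int Y + c) mod int p)) X Y)" for X Y
  have "twirl p P a b x y = 1 / real p ^ 3 * (\<Sum>\<alpha><p. \<Sum>\<beta><p. \<Sum>\<gamma><p. \<Sum>a'<p. \<Sum>b'<p.
          P a' b' ((x + \<alpha>) mod p) ((y + \<beta>) mod p) *
          (if alice_output p (\<alpha>, \<beta>, \<gamma>) x a' = a \<and> bob_output p (\<alpha>, \<beta>, \<gamma>) y b' = b then 1 else 0))"
    unfolding twirl_def by (simp add: sum.cartesian_product[symmetric] sum_distrib_left)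
  also have "\<dots> = 1 / real p ^ 3 * (\<Sum>\<alpha><p. \<Sum>\<beta><p. G ((x + \<alpha>) mod p) ((y + \<beta>) mod p))"
    unfolding G_def c_def using offset_average[OF assms] by simp
  also have "\<dots> = 1 / real p ^ 3 * (\<Sum>X<p. \<Sum>Y<p. G X Y)"
    using sum_shift_mod[OF p, of "\<lambda>X. \<Sum>Y<p. G X Y" x] sum_shift_mod[OF p, of "G _" y] by simp
  also have "\<dots> = mu p P (nat (c mod int p)) / real p"
    using p by (simp add: mu_mod G_def power3_eq_cube power2_eq_square)
  finally show ?thesis
    by (simp add: c_def)
qed

lemma mixture_eval:
  assumes "0 < p"
  shows "(\<Sum>j<p. mu p P j * PR p j a b x y) = mu p P (nat ((int x * int y - int a + int b) mod int p)) / real p"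
proof -
  have "PR p j a b x y = (if [int j = int x * int y - int a + int b] (mod int p) then 1 / real p else 0)" for j
  proof -
    have "int a - int b - (int x * int y - int j) = int j - (int x * int y - int a + int b)"
      by simp
    then show ?thesis
      unfolding PR_def cong_iff_dvd_diff by presburger
  qed
  then have "(\<Sum>j<p. mu p P j * PR p j a b x y)
      = (\<Sum>j<p. if [int j = int x * int y - int a + int b] (mod int p) then mu p P j / real p else 0)"
    by (intro sum.cong) auto
  also have "\<dots> = mu p P (nat ((int x * int y - int a + int b) mod int p)) / real p"
    by (rule sum_cong_delta[OF assms])
  finally show ?thesis .
qed

theorem lemma2:
  fixes p :: nat and P :: box
  assumes "prime p" and "is_box p P"
  shows "transforms p P (\<lambda>a b x y. \<Sum>j<p. mu p P j * PR p j a b x y)"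
proof -
  have p: "0 < p"
    using assms(1) by (rule prime_gt_0_nat)
  have "simulates p 1 P (\<lambda>a b x y. \<Sum>j<p. mu p P j * PR p j a b x y)"
    by (rule simulates_twirl[OF p]) (simp add: mixture_eval[OF p] twirl_eval[OF p])
  then show ?thesis
    unfolding transforms_def by blast
qed

end
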